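(* Let $d\in R$ be a nonzero square-free element, let $f=\tfrac{g}{d}\in\mathbb{K}[x]$ with $g\in R[x]$ be a polynomial of degree $k\ge 1$, and let $a_0,a_1,\ldots,a_k$ be a $d$-sequence of length $k$ for $S$. For an irreducible $\pi\in R$, let $s_\pi\in\{1,2,\ldots\}\cup\{\infty\}$ denote the number of distinct residue classes modulo $\pi$ that contain an element of $S$ (i.e. the maximal number of elements of $S$ pairwise incongruent modulo $\pi$). Then $f\in\mathrm{Int}(S,R)$ if and only if, for every irreducible $\pi$ dividing $d$, one has $\pi\mid g(a_i)$ for all integers $0\le i\le \min(s_\pi,k)$.
   Context: Let $R$ be a unique factorization domain with field of fractions $\mathbb{K}$, and let $S\subseteq R$ be a nonempty subset. Define $\mathrm{Int}(S,R)=\{f\in\mathbb{K}[x]: f(a)\in R \text{ for all } a\in S\}$. For an irreducible $\pi\in R$, $R_{(\pi)}$ denotes the localization of $R$ at the prime ideal $(\pi)$, $\mathrm{Int}(S,R_{(\pi)})=\{f\in\mathbb{K}[x]: f(a)\in R_{(\pi)} \text{ for all } a\in S\}$, and $v_\pi$ denotes the $\pi$-adic valuation. An element of $R$ is square-free if it is not divisible by the square of any irreducible element. $\pi$-sequence: for an irreducible $\pi\in R$ and a positive integer $k$, a $\pi$-sequence of length $k$ in $S$ is a sequence $u_0,u_1,\ldots,u_k$ of distinct elements of $S$ such that for every $1\le m\le k$, $$\frac{(x-u_0)(x-u_1)\cdots(x-u_{m-1})}{(u_m-u_0)(u_m-u_1)\cdots(u_m-u_{m-1})}\in\mathrm{Int}(S,R_{(\pi)}).$$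 $d$-sequence: let $d\in R$ be nonzero and $k$ a positive integer. Let $\pi_1,\ldots,\pi_r$ be a complete list of pairwise non-associate irreducible elements of $R$ dividing $d$. For each $1\le j\le r$ choose a $\pi_j$-sequence $u_{0j},u_{1j},\ldots,u_{kj}$ of length $k$ in $S$, and let $e_j=v_{\pi_j}\big((u_{kj}-u_{0j})(u_{kj}-u_{1j})\cdots(u_{kj}-u_{k-1,j})\big)$. A $d$-sequence of length $k$ (for $S$) is any sequence $a_0,a_1,\ldots,a_k$ of elements of $R$ satisfying $$a_i\equiv u_{ij}\pmod{\pi_j^{e_j+1}}\quad\text{for all } 0\le i\le k,\ 1\le j\le r.$$ (Such sequences exist by the Chinese remainder theorem; they depend on the choices made, and the $a_i$ need not lie in $S$.) *)

theory Defs
  imports "HOL-Computational_Algebra.Computational_Algebra" "HOL-Library.Extended_Nat"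
begin

text \<open>R is modelled by a type 'a of class {factorial_semiring, idom} (a UFD); its field of
fractions is 'a fract, with the embedding to_fract.\<close>

definition IntSR :: "'a::idom set \<Rightarrow> 'a fract poly set" where
  "IntSR S = {f. \<forall>a\<in>S. poly f (to_fract a) \<in> range to_fract}"

definition loc_at :: "'a::idom \<Rightarrow> 'a fract set" where
  "loc_at p = {Fract r s | r s. \<not> p dvd s}"

definition IntS_loc :: "'a::idom set \<Rightarrow> 'a \<Rightarrow> 'a fract poly set" where
  "IntS_loc S p = {f. \<forall>a\<in>S. poly f (to_fract a) \<in> loc_at p}"

definition pi_sequence :: "'a::idom \<Rightarrow> 'a set \<Rightarrow> nat \<Rightarrow> (nat \<Rightarrow> 'a) \<Rightarrow> bool" where
  "pi_sequence p S k u \<longleftrightarrow>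
     (\<forall>i\<le>k. u i \<in> S) \<and> inj_on u {..k} \<and>
     (\<forall>m\<in>{1..k}.
        smult (inverse (to_fract (\<Prod>i<m. u m - u i))) (\<Prod>i<m. [:- to_fract (u i), 1:])
          \<in> IntS_loc S p)"

text \<open>d-sequence a_0,...,a_k of length k for S.  The complete list of pairwise
non-associate irreducible divisors of d is taken to be prime_factors d
(the normalized prime = irreducible factors of d).\<close>
definition d_sequence :: "'a::{factorial_semiring,idom} \<Rightarrow> 'a set \<Rightarrow> nat \<Rightarrow> (nat \<Rightarrow> 'a) \<Rightarrow> bool" where
  "d_sequence d S k a \<longleftrightarrow>
     (\<exists>u::'a \<Rightarrow> nat \<Rightarrow> 'a. \<forall>p\<in>prime_factors d.
        pi_sequence p S k (u p) \<and>
        (\<forall>i\<le>k. p ^ (multiplicity p (\<Prod>j<k. u p k - u p j) + 1) dvd (a i - u p i)))"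

definition res_count :: "'a::comm_ring_1 \<Rightarrow> 'a set \<Rightarrow> enat" where
  "res_count p S = (let C = (\<lambda>a. {b. p dvd (b - a)}) ` S in
                     if finite C then enat (card C) else \<infinity>)"

definition square_free :: "'a::comm_semiring_1 \<Rightarrow> bool" where
  "square_free d \<longleftrightarrow> \<not> (\<exists>p. irreducible p \<and> p ^ 2 dvd d)"

end

theory Submission imports Defs begin

text \<open>
  Since f = g/d, f is integer-valued on S iff d divides every g(x), x \<in> S, and as d is
  square-free this holds iff every prime \<pi> dividing d divides every g(x).  Fix \<pi> and the
  \<pi>-sequence u_0, ..., u_k behind the d-sequence, so that a_i \<equiv> u_i (mod \<pi>).
  Evaluating the defining polynomials of the \<pi>-sequence at an element of S outside the
  residue classes of u_0, ..., u_(m-1) shows that u_m lies in a new residue class as long as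
  such an element exists.  Hence either u_0, ..., u_k are pairwise incongruent, and then
  s_\<pi> > k and a polynomial of degree at most k vanishing modulo \<pi> at k + 1 incongruent
  points vanishes modulo \<pi> everywhere; or some m \<le> k of them are pairwise incongruent
  and already cover the residue classes of S, so that m \<le> s_\<pi> and every x \<in> S is
  congruent to some u_i with i < m.
\<close>

lemma poly_fract_poly: "poly (map_poly to_fract g) (to_fract x) = to_fract (poly g x)"
  by (induct g) (auto simp: map_poly_pCons)

lemma to_fract_prod: "to_fract (\<Prod>i\<in>A. f i) = (\<Prod>i\<in>A. to_fract (f i))"
  by (induct A rule: infinite_finite_induct) auto

lemma Fract_in_range_to_fract_iff:
  assumes "(d::'a::idom) \<noteq> 0"
  shows "Fract y d \<in> range to_fract \<longleftrightarrow> d dvd y"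
proof
  assume "Fract y d \<in> range to_fract"
  then obtain z where "Fract y d = Fract z 1" by (auto simp: to_fract_def)
  then have "y = z * d" using assms by (simp add: eq_fract)
  then show "d dvd y" by simp
next
  assume "d dvd y"
  then obtain z where "y = d * z" by blast
  then have "Fract y d = to_fract z" using assms by (simp add: to_fract_def eq_fract)
  then show "Fract y d \<in> range to_fract" by simp
qed

lemma IntSR_smult_inverse_iff:
  fixes d :: "'a::idom"
  assumes "d \<noteq> 0"
  shows "smult (inverse (to_fract d)) (map_poly to_fract g) \<in> IntSR S \<longleftrightarrow>
         (\<forall>x\<in>S. d dvd poly g x)"
proof -
  have "poly (smult (inverse (to_fract d)) (map_poly to_fract g)) (to_fract x) = Fract (poly g x) d"
    for x
    by (simp add: poly_fract_poly) (simp add: to_fract_def)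
  then show ?thesis
    unfolding IntSR_def using Fract_in_range_to_fract_iff[OF assms] by simp
qed

lemma diff_dvd_poly_diff: "(x - y :: 'a::comm_ring_1) dvd poly g x - poly g y"
proof (induct g)
  case (pCons c g)
  have "poly (pCons c g) x - poly (pCons c g) y = (x - y) * poly g x + y * (poly g x - poly g y)"
    by (simp add: algebra_simps)
  with pCons show ?case by simp
qed simp

lemma dvd_poly_cong:
  fixes p :: "'a::comm_ring_1"
  assumes "p dvd x - y"
  shows "p dvd poly g x \<longleftrightarrow> p dvd poly g y"
proof -
  have "p dvd poly g x - poly g y" using assms diff_dvd_poly_diff dvd_trans by blast
  then show ?thesis by (metis diff_add_cancel dvd_add_right_iff)
qed

definition pairwise_incongruent :: "'a::comm_ring_1 \<Rightarrow> (nat \<Rightarrow> 'a) \<Rightarrow> nat \<Rightarrow> bool" where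
  "pairwise_incongruent p u n \<longleftrightarrow> (\<forall>i<n. \<forall>j<n. i \<noteq> j \<longrightarrow> \<not> p dvd u i - u j)"

lemma prime_elem_dvd_poly_if_dvd_at_incongruent:
  fixes p :: "'a::idom"
  assumes "prime_elem p" "degree g \<le> n" "pairwise_incongruent p b (Suc n)"
    "\<And>i. i \<le> n \<Longrightarrow> p dvd poly g (b i)"
  shows "p dvd poly g x"
  using assms(2-)
proof (induct n arbitrary: g b)
  case 0
  then obtain c where "g = [:c:]" by (metis degree0_coeffs le_zero_eq)
  with 0(3)[of 0] show ?case by simp
next
  case (Suc n)
  define h where "h = synthetic_div g (b 0)"
  have g_eq: "poly g z = (z - b 0) * poly h z + poly g (b 0)" for z
  proof -
    have "poly g z = poly ([:- b 0, 1:] * h + [:poly g (b 0):]) z"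
      by (simp only: h_def synthetic_div_correct')
    then show ?thesis by (simp add: algebra_simps)
  qed
  have "degree h \<le> n" using Suc(2) by (simp add: h_def degree_synthetic_div)
  moreover have "pairwise_incongruent p (\<lambda>i. b (Suc i)) (Suc n)"
    using Suc(3) by (auto simp: pairwise_incongruent_def)
  moreover have "p dvd poly h (b (Suc i))" if "i \<le> n" for i
  proof -
    have "p dvd (b (Suc i) - b 0) * poly h (b (Suc i)) + poly g (b 0)"
      using Suc(4)[of "Suc i"] that g_eq[of "b (Suc i)"] by simp
    then have "p dvd (b (Suc i) - b 0) * poly h (b (Suc i))"
      using Suc(4)[of 0] dvd_add_left_iff by blast
    moreover have "\<not> p dvd b (Suc i) - b 0"
      using Suc(3) that by (auto simp: pairwise_incongruent_def)
    ultimately show ?thesis using assms(1) prime_elem_dvd_mult_iff by blast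
  qed
  ultimately have "p dvd poly h x" using Suc(1) by blast
  then show ?case using g_eq[of x] Suc(4)[of 0] by simp
qed

lemma square_free_multiplicity_le_1:
  fixes d :: "'a::factorial_semiring"
  assumes "square_free d" "prime q"
  shows "multiplicity q d \<le> 1"
proof (rule ccontr)
  assume "\<not> multiplicity q d \<le> 1"
  then have "q ^ 2 dvd d" by (intro multiplicity_dvd') simp
  moreover have "irreducible q" using assms(2) by (simp add: prime_elem_imp_irreducible)
  ultimately show False using assms(1) unfolding square_free_def by blast
qed

lemma square_free_dvd_iff_prime_factors_dvd:
  fixes d :: "'a::factorial_semiring"
  assumes "d \<noteq> 0" "square_free d"
  shows "d dvd y \<longleftrightarrow> (\<forall>q\<in>prime_factors d. q dvd y)"
proof (intro iffI ballI)
  assume "\<forall>q\<in>prime_factors d. q dvd y"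
  then have q_dvd: "q dvd y" if "prime q" "q dvd d" for q
    using that assms(1) by (simp add: in_prime_factors_iff)
  show "d dvd y"
  proof (cases "y = 0")
    case False
    show ?thesis
    proof (rule multiplicity_le_imp_dvd[OF assms(1)])
      fix q :: 'a assume q: "prime q"
      show "multiplicity q d \<le> multiplicity q y"
      proof (cases "q dvd d")
        case True
        then have "multiplicity q y > 0"
          using False q q_dvd prime_multiplicity_gt_zero_iff by blast
        then show ?thesis using square_free_multiplicity_le_1[OF assms(2) q] by linarith
      qed (simp add: not_dvd_imp_multiplicity_0)
    qed
  qed simp
qed (blast intro: dvd_trans)

lemma ball_prime_factors_iff_irreducible_dvd:
  fixes d :: "'a::factorial_semiring"
  assumes "d \<noteq> 0" "\<And>p. P (normalize p) \<longleftrightarrow> P p"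
  shows "(\<forall>q\<in>prime_factors d. P q) \<longleftrightarrow> (\<forall>p. irreducible p \<and> p dvd d \<longrightarrow> P p)"
proof (intro iffI allI impI ballI)
  fix p assume all: "\<forall>q\<in>prime_factors d. P q" and p: "irreducible p \<and> p dvd d"
  then have "normalize p \<in> prime_factors d"
    using assms(1) by (simp add: in_prime_factors_iff irreducible_imp_prime_elem)
  then show "P p" using all assms(2) by blast
next
  fix q assume "\<forall>p. irreducible p \<and> p dvd d \<longrightarrow> P p" and "q \<in> prime_factors d"
  then show "P q" using assms(1) by (auto simp: in_prime_factors_iff prime_elem_imp_irreducible)
qed

lemma res_count_normalize [simp]: "res_count (normalize p) S = res_count p S"
  by (simp add: res_count_def)

lemma res_count_ge_if_pairwise_incongruent:
  assumes "\<And>i. i < n \<Longrightarrow> u i \<in> S" "pairwise_incongruent p u n"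
  shows "enat n \<le> res_count p S"
proof -
  define cl where "cl = (\<lambda>a. {b. p dvd b - a})"
  have inj: "inj_on (cl \<circ> u) {..<n}"
  proof (rule inj_onI)
    fix i j assume ij: "i \<in> {..<n}" "j \<in> {..<n}" "(cl \<circ> u) i = (cl \<circ> u) j"
    have "u i \<in> cl (u i)" by (simp add: cl_def)
    then have "u i \<in> cl (u j)" using ij(3) by simp
    then have "p dvd u i - u j" by (simp add: cl_def)
    then show "i = j" using assms(2) ij by (auto simp: pairwise_incongruent_def)
  qed
  have sub: "(cl \<circ> u) ` {..<n} \<subseteq> cl ` S" using assms(1) by auto
  show ?thesis
  proof (cases "finite (cl ` S)")
    case True
    have "n = card ((cl \<circ> u) ` {..<n})" using card_image[OF inj] by simp
    also have "\<dots> \<le> card (cl ` S)" using True sub by (rule card_mono)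
    finally show ?thesis using True unfolding res_count_def cl_def[symmetric] Let_def by simp
  qed (unfold res_count_def cl_def[symmetric] Let_def, simp)
qed

lemma pi_sequence_in: "pi_sequence p S k u \<Longrightarrow> i \<le> k \<Longrightarrow> u i \<in> S"
  by (simp add: pi_sequence_def)

text \<open>
  At a point b \<in> S incongruent to u_0, ..., u_(m-1) the m-th defining polynomial of the
  \<pi>-sequence takes the value \<Prod>(b - u_i) / \<Prod>(u_m - u_i), whose numerator is prime to p;
  so p cannot divide the denominator.
\<close>
lemma pi_sequence_next_incongruent:
  fixes p :: "'a::{factorial_semiring,idom}"
  assumes p: "prime p" and ps: "pi_sequence p S k u" and m: "1 \<le> m" "m \<le> k"
    and b: "b \<in> S" "\<And>i. i < m \<Longrightarrow> \<not> p dvd b - u i"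
    and i: "i < m"
  shows "\<not> p dvd u m - u i"
proof
  assume "p dvd u m - u i"
  define D where "D = (\<Prod>i<m. u m - u i)"
  define N where "N = (\<Prod>i<m. b - u i)"
  have "D \<noteq> 0"
  proof
    assume "D = 0"
    then obtain j where "j < m" "u m = u j" by (auto simp: D_def)
    moreover have "inj_on u {..k}" using ps by (simp add: pi_sequence_def)
    ultimately show False using m by (auto dest: inj_onD)
  qed
  have "p dvd D" unfolding D_def using \<open>p dvd u m - u i\<close> i p by (auto simp: prime_dvd_prod_iff)
  have "\<not> p dvd N" unfolding N_def using b(2) p by (simp add: prime_dvd_prod_iff)
  define P where "P = smult (inverse (to_fract D)) (\<Prod>i<m. [:- to_fract (u i), 1:])"
  have "P \<in> IntS_loc S p" using ps m by (auto simp: pi_sequence_def P_def D_def)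
  then have "poly P (to_fract b) \<in> loc_at p" using b(1) unfolding IntS_loc_def by blast
  moreover have "poly P (to_fract b) = inverse (to_fract D) * to_fract N"
    by (simp add: P_def poly_prod N_def to_fract_prod)
  moreover have "inverse (to_fract D) * to_fract N = Fract N D"
    by (simp add: to_fract_def)
  ultimately obtain r s where rs: "Fract N D = Fract r s" "\<not> p dvd s"
    unfolding loc_at_def by auto
  moreover have "s \<noteq> 0" using rs(2) by auto
  ultimately have "N * s = r * D" using \<open>D \<noteq> 0\<close> by (simp add: eq_fract)
  then have "p dvd N * s" using \<open>p dvd D\<close> by (metis dvd_mult)
  then show False using p rs(2) \<open>\<not> p dvd N\<close> by (simp add: prime_dvd_mult_iff)
qed

lemma pi_sequence_incongruent_or_covers:
  fixes p :: "'a::{factorial_semiring,idom}"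
  assumes p: "prime p" and ps: "pi_sequence p S k u" and n: "n \<le> Suc k"
  shows "pairwise_incongruent p u n \<or>
         (\<exists>m\<le>k. pairwise_incongruent p u m \<and> (\<forall>b\<in>S. \<exists>i<m. p dvd b - u i))"
  using n
proof (induct n)
  case 0
  then show ?case by (simp add: pairwise_incongruent_def)
next
  case (Suc n)
  show ?case
  proof (cases "pairwise_incongruent p u n \<and> \<not> (\<forall>b\<in>S. \<exists>i<n. p dvd b - u i)")
    case True
    then obtain b where b: "b \<in> S" "\<And>i. i < n \<Longrightarrow> \<not> p dvd b - u i" by auto
    have "\<not> p dvd u n - u i" if "i < n" for i
      using pi_sequence_next_incongruent[OF p ps _ _ b that] that Suc(2) by auto
    moreover have "p dvd u i - u n \<longleftrightarrow> p dvd u n - u i" for i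
      by (metis dvd_minus_iff minus_diff_eq)
    ultimately have "pairwise_incongruent p u (Suc n)"
      using True by (auto simp: pairwise_incongruent_def less_Suc_eq)
    then show ?thesis by blast
  qed (use Suc in auto)
qed

lemma prime_dvd_poly_on_iff_dvd_at_sequence:
  fixes p :: "'a::{factorial_semiring,idom}"
  assumes p: "prime p" and ps: "pi_sequence p S k u" and deg: "degree g \<le> k"
    and cong: "\<And>i. i \<le> k \<Longrightarrow> p dvd a i - u i"
  shows "(\<forall>x\<in>S. p dvd poly g x) \<longleftrightarrow>
         (\<forall>i\<le>k. enat i \<le> res_count p S \<longrightarrow> p dvd poly g (a i))"
proof -
  have "(\<forall>i\<le>k. enat i \<le> res_count p S \<longrightarrow> p dvd poly g (a i)) \<longleftrightarrow>
        (\<forall>i\<le>k. enat i \<le> res_count p S \<longrightarrow> p dvd poly g (u i))"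
    using dvd_poly_cong[OF cong] by blast
  moreover have "\<forall>x\<in>S. p dvd poly g x"
    if at_u: "\<forall>i\<le>k. enat i \<le> res_count p S \<longrightarrow> p dvd poly g (u i)"
  proof
    fix x assume "x \<in> S"
    have u_in: "u i \<in> S" if "i < n" "n \<le> Suc k" for i n
      using pi_sequence_in[OF ps] that by simp
    consider "pairwise_incongruent p u (Suc k)"
      | m where "m \<le> k" "pairwise_incongruent p u m" "\<forall>b\<in>S. \<exists>i<m. p dvd b - u i"
      using pi_sequence_incongruent_or_covers[OF p ps] by blast
    then show "p dvd poly g x"
    proof cases
      case 1
      have "enat (Suc k) \<le> res_count p S"
        using res_count_ge_if_pairwise_incongruent[OF _ 1] u_in by blast
      then have "p dvd poly g (u i)" if "i \<le> k" for i
        using at_u that by (meson enat_ord_simps(1) le_SucI order_trans)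
      then show ?thesis using prime_elem_dvd_poly_if_dvd_at_incongruent[OF prime_imp_prime_elem[OF p] deg 1] by blast
    next
      case 2
      then obtain i where i: "i < m" "p dvd x - u i" using \<open>x \<in> S\<close> by blast
      have "enat m \<le> res_count p S"
        using res_count_ge_if_pairwise_incongruent[OF _ 2(2)] u_in 2(1) by simp
      then have "p dvd poly g (u i)"
        using at_u i(1) 2(1) by (meson enat_ord_simps(1) less_imp_le order_trans)
      then show ?thesis using dvd_poly_cong[OF i(2)] by blast
    qed
  qed
  ultimately show ?thesis using pi_sequence_in[OF ps] by blast
qed

theorem lemma4p2:
  fixes d :: "'a::{factorial_semiring,idom}" and g :: "'a poly" and S :: "'a set"
    and f :: "'a fract poly" and k :: nat and a :: "nat \<Rightarrow> 'a"
  assumes "S \<noteq> {}"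
    and "d \<noteq> 0" and "square_free d"
    and "f = smult (inverse (to_fract d)) (map_poly to_fract g)"
    and "degree f = k" and "k \<ge> 1"
    and "d_sequence d S k a"
  shows "f \<in> IntSR S \<longleftrightarrow>
         (\<forall>p. irreducible p \<and> p dvd d \<longrightarrow>
            (\<forall>i::nat. i \<le> k \<and> enat i \<le> res_count p S \<longrightarrow> p dvd poly g (a i)))"
proof -
  define P where "P q \<longleftrightarrow> (\<forall>i\<le>k. enat i \<le> res_count q S \<longrightarrow> q dvd poly g (a i))" for q
  obtain u where u: "\<And>q. q \<in> prime_factors d \<Longrightarrow> pi_sequence q S k (u q) \<and>
      (\<forall>i\<le>k. q ^ (multiplicity q (\<Prod>j<k. u q k - u q j) + 1) dvd a i - u q i)"
    using assms(7) unfolding d_sequence_def by blast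
  have "degree g \<le> k" using assms(2,4,5) by (simp add: degree_map_poly)
  then have "(\<forall>x\<in>S. q dvd poly g x) \<longleftrightarrow> P q" if "q \<in> prime_factors d" for q
    unfolding P_def using u[OF that] that
    by (intro prime_dvd_poly_on_iff_dvd_at_sequence) (auto intro: dvd_trans[rotated])
  then have "f \<in> IntSR S \<longleftrightarrow> (\<forall>q\<in>prime_factors d. P q)"
    using assms(2-4) by (auto simp: IntSR_smult_inverse_iff square_free_dvd_iff_prime_factors_dvd)
  also have "\<dots> \<longleftrightarrow> (\<forall>p. irreducible p \<and> p dvd d \<longrightarrow> P p)"
    using assms(2) by (intro ball_prime_factors_iff_irreducible_dvd) (simp_all add: P_def)
  finally show ?thesis unfolding P_def by blast
qed

end
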